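(* Let $V$ be a finite set, $\mu\colon\binom V2\to\mathbb{Z}_+$, and suppose $V=V_1\sqcup V_2$ with $V_1,V_2$ nonempty and $\mu(e)=1$ for every edge $e$ with one endpoint in $V_1$ and the other in $V_2$. Then $(\Delta_V)_\mu\cong(\Delta_{V_1})_{\mu_1}\ast(\Delta_{V_2})_{\mu_2}$, where $\mu_1,\mu_2$ are the restrictions of $\mu$ to $\binom{V_1}{2}$ and $\binom{V_2}{2}$.
   Context: $\Delta_V$ is the full simplex on $V$, viewed as the simplicial poset of nonempty subsets of $V$. Edge inflation: for $\mu\colon\binom V2\to\mathbb{Z}_+$, $(\Delta_V)_\mu$ is the poset of pairs $(I,c_I)$ with $\varnothing\neq I\subseteq V$ and $c_I\colon\binom I2\to\mathbb{Z}_+$, $c_I(e)\in\{1,\dots,\mu(e)\}$, ordered by $(I,c_I)<(J,c_J)$ iff $I\subsetneq J$ and $c_I=c_J|_{\binom I2}$. The join $K_1\ast K_2$ of simplicial posets is the simplicial poset whose simplices are $J_1\ast J_2$ with $J_i\in K_i$ or empty (not both empty), ordered componentwise. *)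

theory Defs
  imports Main
begin

definition edges :: "'a set \<Rightarrow> 'a set set" where
  "edges I = {e. e \<subseteq> I \<and> card e = 2}"

text \<open>Edge inflation of the full simplex on V: pairs (I, c_I) with I a nonempty
  subset of V and c_I a colouring of the edges of I with c_I(e) in {1..mu e}.
  c_I is stored as a total function that is 0 outside the edges of I.\<close>

definition inflation :: "'a set \<Rightarrow> ('a set \<Rightarrow> nat) \<Rightarrow> ('a set \<times> ('a set \<Rightarrow> nat)) set" where
  "inflation V \<mu> = {(I, c). I \<noteq> {} \<and> I \<subseteq> V \<and>
      (\<forall>e\<in>edges I. 1 \<le> c e \<and> c e \<le> \<mu> e) \<and> (\<forall>e. e \<notin> edges I \<longrightarrow> c e = 0)}"

text \<open>(I,c) \<le> (J,d) iff I \<subseteq> J and c is the restriction of d to the edges of I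
  (the reflexive closure of the strict order of the paper).\<close>

definition inflation_le :: "('a set \<times> ('a set \<Rightarrow> nat)) \<Rightarrow> ('a set \<times> ('a set \<Rightarrow> nat)) \<Rightarrow> bool" where
  "inflation_le x y = (fst x \<subseteq> fst y \<and> (\<forall>e\<in>edges (fst x). snd x e = snd y e))"

text \<open>Join of posets: pairs (J1, J2) with each Ji an element of Ki or empty (None),
  not both empty, ordered componentwise (None below everything).\<close>

definition opt_le :: "('b \<Rightarrow> 'b \<Rightarrow> bool) \<Rightarrow> 'b option \<Rightarrow> 'b option \<Rightarrow> bool" where
  "opt_le le x y = (case (x, y) of
      (None, _) \<Rightarrow> True
    | (Some _, None) \<Rightarrow> False
    | (Some a, Some b) \<Rightarrow> le a b)"

definition join_carrier :: "'b set \<Rightarrow> 'c set \<Rightarrow> ('b option \<times> 'c option) set" where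
  "join_carrier K1 K2 = {(x, y). (x = None \<or> the x \<in> K1) \<and> (y = None \<or> the y \<in> K2)
      \<and> \<not> (x = None \<and> y = None)}"

definition join_le :: "('b \<Rightarrow> 'b \<Rightarrow> bool) \<Rightarrow> ('c \<Rightarrow> 'c \<Rightarrow> bool) \<Rightarrow>
    ('b option \<times> 'c option) \<Rightarrow> ('b option \<times> 'c option) \<Rightarrow> bool" where
  "join_le le1 le2 p q = (opt_le le1 (fst p) (fst q) \<and> opt_le le2 (snd p) (snd q))"

definition poset_iso :: "'b set \<Rightarrow> ('b \<Rightarrow> 'b \<Rightarrow> bool) \<Rightarrow> 'c set \<Rightarrow> ('c \<Rightarrow> 'c \<Rightarrow> bool) \<Rightarrow> bool" where
  "poset_iso A leA B leB = (\<exists>f. bij_betw f A B \<and>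
      (\<forall>x\<in>A. \<forall>y\<in>A. leA x y \<longleftrightarrow> leB (f x) (f y)))"

definition restrict_mult :: "('a set \<Rightarrow> nat) \<Rightarrow> 'a set \<Rightarrow> ('a set \<Rightarrow> nat)" where
  "restrict_mult \<mu> W = (\<lambda>e. if e \<in> edges W then \<mu> e else 0)"

end

theory Submission
  imports Defs
begin

text \<open>Adjoining the empty face (empty vertex set, zero colouring) to the inflation
  of the full simplex on V gives a poset that is the product of the corresponding
  posets for V1 and V2: a coloured face is determined by its restrictions to V1 and
  V2, because every edge between V1 and V2 has multiplicity 1 and therefore colour 1.
  Removing the empty face on both sides turns this product into the join, since a
  join of posets is the product of the posets with bottoms adjoined, minus the pair
  of bottoms.\<close>

type_synonym 'a face = "'a set \<times> ('a set \<Rightarrow> nat)"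

lemma edges_empty [simp]: "edges {} = {}"
  by (auto simp: edges_def)

lemma edges_mono: "A \<subseteq> B \<Longrightarrow> edges A \<subseteq> edges B"
  by (auto simp: edges_def)

lemma edges_Int: "edges (A \<inter> B) = edges A \<inter> edges B"
  by (auto simp: edges_def)

lemma edges_UnE:
  assumes "e \<in> edges (A \<union> B)" "e \<notin> edges A" "e \<notin> edges B"
  obtains u v where "u \<in> A" "v \<in> B" "e = {u, v}"
proof -
  obtain a b where ab: "e = {a, b}" "a \<noteq> b" "e \<subseteq> A \<union> B"
    using assms(1) by (auto simp: edges_def card_2_iff)
  then have "\<not> e \<subseteq> A" "\<not> e \<subseteq> B"
    using assms(2,3) by (auto simp: edges_def)
  then have "a \<in> A \<and> b \<in> B \<or> b \<in> A \<and> a \<in> B"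
    using ab by blast
  then show thesis
    using that ab(1) by (metis insert_commute)
qed

lemma inflation_restrict_mult: "inflation W (restrict_mult \<mu> W) = inflation W \<mu>"
proof -
  have "restrict_mult \<mu> W e = \<mu> e" if "J \<subseteq> W" "e \<in> edges J" for J e
    using edges_mono[OF that(1)] that(2) by (auto simp: restrict_mult_def)
  then show ?thesis
    unfolding inflation_def by (auto 0 3)
qed

definition empty_face :: "'a face" where
  "empty_face = ({}, \<lambda>_. 0)"

definition faces :: "'a set \<Rightarrow> ('a set \<Rightarrow> nat) \<Rightarrow> 'a face set" where
  "faces V \<mu> = insert empty_face (inflation V \<mu>)"

definition face_restrict :: "'a set \<Rightarrow> 'a face \<Rightarrow> 'a face" where
  "face_restrict W p = (fst p \<inter> W, restrict_mult (snd p) (fst p \<inter> W))"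

definition face_join :: "'a face \<Rightarrow> 'a face \<Rightarrow> 'a face" where
  "face_join p q = (fst p \<union> fst q, \<lambda>e.
     if e \<in> edges (fst p) then snd p e
     else if e \<in> edges (fst q) then snd q e
     else if e \<in> edges (fst p \<union> fst q) then 1 else 0)"

definition pair_le :: "('b \<Rightarrow> 'b \<Rightarrow> bool) \<Rightarrow> ('c \<Rightarrow> 'c \<Rightarrow> bool) \<Rightarrow> 'b \<times> 'c \<Rightarrow> 'b \<times> 'c \<Rightarrow> bool" where
  "pair_le le1 le2 p q = (le1 (fst p) (fst q) \<and> le2 (snd p) (snd q))"

lemma mem_faces_iff:
  "p \<in> faces V \<mu> \<longleftrightarrow> fst p \<subseteq> V \<and> (\<forall>e\<in>edges (fst p). 1 \<le> snd p e \<and> snd p e \<le> \<mu> e)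
     \<and> (\<forall>e. e \<notin> edges (fst p) \<longrightarrow> snd p e = 0)"
  by (cases p) (auto simp: faces_def inflation_def empty_face_def)

lemma inflation_eq_faces: "inflation V \<mu> = {p \<in> faces V \<mu>. fst p \<noteq> {}}"
  by (auto simp: faces_def inflation_def empty_face_def)

lemma faces_fst_empty_iff: "p \<in> faces V \<mu> \<Longrightarrow> fst p = {} \<longleftrightarrow> p = empty_face"
  by (cases p) (auto simp: mem_faces_iff empty_face_def)

lemma faces_colour_eq_1:
  "p \<in> faces V \<mu> \<Longrightarrow> e \<in> edges (fst p) \<Longrightarrow> \<mu> e = 1 \<Longrightarrow> snd p e = 1"
  by (fastforce simp: mem_faces_iff)

lemma empty_face_notin_inflation [simp]: "empty_face \<notin> inflation V \<mu>"
  by (simp add: inflation_def empty_face_def)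

lemma empty_face_le [simp]: "inflation_le empty_face p"
  by (simp add: inflation_le_def empty_face_def)

lemma inflation_not_le_empty_face: "p \<in> inflation V \<mu> \<Longrightarrow> \<not> inflation_le p empty_face"
  by (auto simp: inflation_le_def inflation_eq_faces empty_face_def)

lemma face_restrict_in_faces: "p \<in> faces V \<mu> \<Longrightarrow> face_restrict W p \<in> faces W \<mu>"
  by (auto simp: mem_faces_iff face_restrict_def restrict_mult_def edges_Int)

lemma face_join_commute:
  assumes "fst p \<inter> fst q = {}"
  shows "face_join p q = face_join q p"
proof -
  have "edges (fst p) \<inter> edges (fst q) = {}"
    using assms by (simp flip: edges_Int)
  then have "e \<notin> edges (fst p) \<or> e \<notin> edges (fst q)" for e
    by blast
  then show ?thesis
    unfolding face_join_def by (simp add: fun_eq_iff Un_commute)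
qed

lemma face_join_in_faces:
  assumes p: "p \<in> faces V1 \<mu>" and q: "q \<in> faces V2 \<mu>"
    and cross: "\<forall>u\<in>V1. \<forall>v\<in>V2. \<mu> {u, v} = 1"
  shows "face_join p q \<in> faces (V1 \<union> V2) \<mu>"
proof -
  let ?I = "fst p \<union> fst q" and ?c = "snd (face_join p q)"
  have sub: "edges (fst p) \<subseteq> edges ?I" "edges (fst q) \<subseteq> edges ?I"
    by (simp_all add: edges_mono)
  have "1 \<le> ?c e \<and> ?c e \<le> \<mu> e" if e: "e \<in> edges ?I" for e
  proof (cases "e \<in> edges (fst p) \<or> e \<in> edges (fst q)")
    case True
    then show ?thesis
      using p q by (auto simp: face_join_def mem_faces_iff)
  next
    case False
    then obtain u v where "u \<in> fst p" "v \<in> fst q" "e = {u, v}"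
      using edges_UnE[OF e] by blast
    then have "\<mu> e = 1"
      using p q cross by (auto simp: mem_faces_iff)
    then show ?thesis
      using e False by (simp add: face_join_def)
  qed
  moreover have "?c e = 0" if "e \<notin> edges ?I" for e
    using that sub by (auto simp: face_join_def)
  moreover have "?I \<subseteq> V1 \<union> V2"
    using p q by (auto simp: mem_faces_iff)
  ultimately show ?thesis
    by (simp add: mem_faces_iff face_join_def)
qed

lemma face_restrict_face_join:
  assumes "p \<in> faces W \<mu>" "fst q \<inter> W = {}"
  shows "face_restrict W (face_join p q) = p"
proof -
  have "(fst p \<union> fst q) \<inter> W = fst p"
    using assms by (auto simp: mem_faces_iff)
  then show ?thesis
    using assms(1) by (cases p) (auto simp: face_restrict_def face_join_def restrict_mult_def
        mem_faces_iff fun_eq_iff)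
qed

lemma face_join_face_restrict:
  assumes p: "p \<in> faces (V1 \<union> V2) \<mu>" and cross: "\<forall>u\<in>V1. \<forall>v\<in>V2. \<mu> {u, v} = 1"
  shows "face_join (face_restrict V1 p) (face_restrict V2 p) = p"
proof -
  obtain I c where I: "p = (I, c)"
    by (cases p)
  have vertices: "I \<inter> V1 \<union> I \<inter> V2 = I"
    using p I by (auto simp: mem_faces_iff)
  have "snd (face_join (face_restrict V1 p) (face_restrict V2 p)) e = c e" for e
  proof (cases "e \<in> edges (I \<inter> V1) \<or> e \<in> edges (I \<inter> V2)")
    case True
    then show ?thesis
      using I by (auto simp: face_join_def face_restrict_def restrict_mult_def)
  next
    case outside: False
    show ?thesis
    proof (cases "e \<in> edges I")
      case True
      then obtain u v where "u \<in> V1" "v \<in> V2" "e = {u, v}"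
        using edges_UnE[of e "I \<inter> V1" "I \<inter> V2"] vertices outside by (metis IntD2)
      then have "c e = 1"
        using faces_colour_eq_1[OF p] True cross I by auto
      then show ?thesis
        using I True outside vertices by (simp add: face_join_def face_restrict_def)
    next
      case False
      then show ?thesis
        using I p outside vertices by (simp add: face_join_def face_restrict_def mem_faces_iff)
    qed
  qed
  then show ?thesis
    using I vertices by (simp add: face_join_def face_restrict_def fun_eq_iff)
qed

lemma inflation_le_face_restrict:
  assumes "inflation_le p p'"
  shows "inflation_le (face_restrict W p) (face_restrict W p')"
proof -
  have sub: "fst p \<inter> W \<subseteq> fst p' \<inter> W"
    using assms by (auto simp: inflation_le_def)
  have "edges (fst p \<inter> W) \<subseteq> edges (fst p)"
    by (simp add: edges_mono)
  then show ?thesis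
    using assms sub edges_mono[OF sub]
    by (auto simp: inflation_le_def face_restrict_def restrict_mult_def)
qed

lemma inflation_le_iff_face_restrict:
  assumes p: "p \<in> faces (V1 \<union> V2) \<mu>" and p': "p' \<in> faces (V1 \<union> V2) \<mu>"
    and cross: "\<forall>u\<in>V1. \<forall>v\<in>V2. \<mu> {u, v} = 1"
  shows "inflation_le p p' \<longleftrightarrow>
    inflation_le (face_restrict V1 p) (face_restrict V1 p') \<and>
    inflation_le (face_restrict V2 p) (face_restrict V2 p')"
    (is "_ \<longleftrightarrow> ?le1 \<and> ?le2")
proof
  assume "inflation_le p p'"
  then show "?le1 \<and> ?le2"
    by (simp add: inflation_le_face_restrict)
next
  assume le12: "?le1 \<and> ?le2"
  obtain I c I' c' where I: "p = (I, c)" "p' = (I', c')"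
    by (cases p, cases p')
  have vertices: "I \<inter> V1 \<union> I \<inter> V2 = I"
    using p I by (auto simp: mem_faces_iff)
  have sub: "I \<subseteq> I'"
    using le12 vertices I by (auto simp: inflation_le_def face_restrict_def)
  have agree: "c e = c' e"
    if "inflation_le (face_restrict W p) (face_restrict W p')" "e \<in> edges (I \<inter> W)" for W e
  proof -
    have "e \<in> edges (I' \<inter> W)"
      using that(2) sub edges_mono[of "I \<inter> W" "I' \<inter> W"] by blast
    then show ?thesis
      using that I by (auto simp: inflation_le_def face_restrict_def restrict_mult_def)
  qed
  have "c e = c' e" if e: "e \<in> edges I" for e
  proof (cases "e \<in> edges (I \<inter> V1) \<or> e \<in> edges (I \<inter> V2)")
    case True
    then show ?thesis
      using agree le12 by blast
  next
    case False
    then obtain u v where "u \<in> V1" "v \<in> V2" "e = {u, v}"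
      using edges_UnE[of e "I \<inter> V1" "I \<inter> V2"] vertices e by (metis IntD2)
    then show ?thesis
      using faces_colour_eq_1[OF p] faces_colour_eq_1[OF p'] e edges_mono[OF sub] cross I
      by auto
  qed
  then show "inflation_le p p'"
    using sub I by (simp add: inflation_le_def)
qed

lemma poset_iso_trans:
  assumes "poset_iso A leA B leB" "poset_iso B leB C leC"
  shows "poset_iso A leA C leC"
proof -
  obtain f where f: "bij_betw f A B" "\<forall>x\<in>A. \<forall>y\<in>A. leA x y \<longleftrightarrow> leB (f x) (f y)"
    using assms(1) by (auto simp: poset_iso_def)
  obtain g where g: "bij_betw g B C" "\<forall>x\<in>B. \<forall>y\<in>B. leB x y \<longleftrightarrow> leC (g x) (g y)"
    using assms(2) by (auto simp: poset_iso_def)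
  have "\<forall>x\<in>A. \<forall>y\<in>A. leA x y \<longleftrightarrow> leC ((g \<circ> f) x) ((g \<circ> f) y)"
    using f g bij_betwE[OF f(1)] by simp
  then show ?thesis
    unfolding poset_iso_def using bij_betw_trans[OF f(1) g(1)] by blast
qed

lemma poset_iso_inflation_faces_product:
  assumes disjoint: "V1 \<inter> V2 = {}" and cross: "\<forall>u\<in>V1. \<forall>v\<in>V2. \<mu> {u, v} = 1"
  shows "poset_iso (inflation (V1 \<union> V2) \<mu>) inflation_le
    (faces V1 \<mu> \<times> faces V2 \<mu> - {(empty_face, empty_face)}) (pair_le inflation_le inflation_le)"
proof -
  let ?A = "inflation (V1 \<union> V2) \<mu>" and ?B = "faces V1 \<mu> \<times> faces V2 \<mu> - {(empty_face, empty_face)}"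
  let ?F = "\<lambda>p. (face_restrict V1 p, face_restrict V2 p)"
  have "bij_betw ?F ?A ?B"
  proof (rule bij_betw_byWitness[where f' = "case_prod face_join"])
    show "\<forall>p\<in>?A. case_prod face_join (?F p) = p"
      using face_join_face_restrict[OF _ cross] by (simp add: inflation_eq_faces)
    have "?F (face_join p q) = (p, q)" if p: "p \<in> faces V1 \<mu>" and q: "q \<in> faces V2 \<mu>" for p q
    proof -
      have "fst p \<subseteq> V1" "fst q \<subseteq> V2"
        using p q by (simp_all add: mem_faces_iff)
      then have disj: "fst q \<inter> V1 = {}" "fst p \<inter> V2 = {}" "fst p \<inter> fst q = {}"
        using disjoint by blast+
      have "face_restrict V1 (face_join p q) = p"
        by (rule face_restrict_face_join[OF p disj(1)])
      moreover have "face_restrict V2 (face_join p q) = q"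
        unfolding face_join_commute[OF disj(3)] by (rule face_restrict_face_join[OF q disj(2)])
      ultimately show ?thesis
        by simp
    qed
    then show "\<forall>q\<in>?B. ?F (case_prod face_join q) = q"
      by auto
    have "?F p \<in> ?B" if "p \<in> ?A" for p
    proof -
      have "fst p \<noteq> {}" "fst p \<subseteq> V1 \<union> V2"
        using that by (auto simp: inflation_def)
      then have "fst (face_restrict V1 p) \<noteq> {} \<or> fst (face_restrict V2 p) \<noteq> {}"
        by (auto simp: face_restrict_def)
      then have "?F p \<noteq> (empty_face, empty_face)"
        by (auto simp: empty_face_def)
      moreover have "p \<in> faces (V1 \<union> V2) \<mu>"
        using that by (simp add: inflation_eq_faces)
      ultimately show ?thesis
        by (simp add: face_restrict_in_faces)
    qed
    then show "?F ` ?A \<subseteq> ?B"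
      by (rule image_subsetI)
    have "face_join p q \<in> ?A" if "(p, q) \<in> ?B" for p q
    proof -
      have "p \<in> faces V1 \<mu>" "q \<in> faces V2 \<mu>" "p \<noteq> empty_face \<or> q \<noteq> empty_face"
        using that by auto
      then have "fst (face_join p q) \<noteq> {}"
        using faces_fst_empty_iff[of p V1 \<mu>] faces_fst_empty_iff[of q V2 \<mu>]
        by (auto simp: face_join_def)
      then show ?thesis
        using that face_join_in_faces[OF _ _ cross] by (simp add: inflation_eq_faces)
    qed
    then show "case_prod face_join ` ?B \<subseteq> ?A"
      by (auto intro!: image_subsetI)
  qed
  moreover have "\<forall>p\<in>?A. \<forall>p'\<in>?A. inflation_le p p' \<longleftrightarrow> pair_le inflation_le inflation_le (?F p) (?F p')"
    using inflation_le_iff_face_restrict[OF _ _ cross] by (simp add: inflation_eq_faces pair_le_def)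
  ultimately show ?thesis
    unfolding poset_iso_def by blast
qed

definition lift_bot :: "'b \<Rightarrow> 'b \<Rightarrow> 'b option" where
  "lift_bot b x = (if x = b then None else Some x)"

lemma opt_le_lift_bot:
  assumes "x \<in> insert b K" "x' \<in> insert b K"
    and "\<forall>y\<in>insert b K. le b y" "\<forall>y\<in>K. \<not> le y b"
  shows "opt_le le (lift_bot b x) (lift_bot b x') \<longleftrightarrow> le x x'"
  using assms by (auto simp: lift_bot_def opt_le_def)

lemma poset_iso_product_join_carrier:
  assumes "b1 \<notin> K1" "\<forall>x\<in>insert b1 K1. le1 b1 x" "\<forall>x\<in>K1. \<not> le1 x b1"
    and "b2 \<notin> K2" "\<forall>y\<in>insert b2 K2. le2 b2 y" "\<forall>y\<in>K2. \<not> le2 y b2"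
  shows "poset_iso (insert b1 K1 \<times> insert b2 K2 - {(b1, b2)}) (pair_le le1 le2)
    (join_carrier K1 K2) (join_le le1 le2)"
proof -
  let ?h = "\<lambda>(x, y). (lift_bot b1 x, lift_bot b2 y)"
  have "bij_betw ?h (insert b1 K1 \<times> insert b2 K2 - {(b1, b2)}) (join_carrier K1 K2)"
    by (rule bij_betw_byWitness[where f' = "\<lambda>(x, y). (case_option b1 id x, case_option b2 id y)"])
      (use assms(1,4) in \<open>auto simp: lift_bot_def join_carrier_def split: option.splits if_splits\<close>)
  moreover have "pair_le le1 le2 p p' \<longleftrightarrow> join_le le1 le2 (?h p) (?h p')"
    if "p \<in> insert b1 K1 \<times> insert b2 K2" "p' \<in> insert b1 K1 \<times> insert b2 K2" for p p'
    using that opt_le_lift_bot[of _ b1 K1 _ le1] opt_le_lift_bot[of _ b2 K2 _ le2] assms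
    by (auto simp: pair_le_def join_le_def)
  ultimately show ?thesis
    unfolding poset_iso_def by blast
qed

theorem proposition4p9:
  fixes V V1 V2 :: "'a set" and \<mu> :: "'a set \<Rightarrow> nat"
  assumes "finite V"
    and "\<forall>e\<in>edges V. 1 \<le> \<mu> e"
    and "V = V1 \<union> V2" and "V1 \<inter> V2 = {}"
    and "V1 \<noteq> {}" and "V2 \<noteq> {}"
    and "\<forall>u\<in>V1. \<forall>v\<in>V2. \<mu> {u, v} = 1"
  shows "poset_iso (inflation V \<mu>) inflation_le
           (join_carrier (inflation V1 (restrict_mult \<mu> V1)) (inflation V2 (restrict_mult \<mu> V2)))
           (join_le inflation_le inflation_le)"
proof -
  have "poset_iso (inflation V \<mu>) inflation_le
      (faces V1 \<mu> \<times> faces V2 \<mu> - {(empty_face, empty_face)}) (pair_le inflation_le inflation_le)"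
    using poset_iso_inflation_faces_product[OF assms(4,7)] assms(3) by simp
  moreover have "poset_iso (faces V1 \<mu> \<times> faces V2 \<mu> - {(empty_face, empty_face)})
      (pair_le inflation_le inflation_le)
      (join_carrier (inflation V1 \<mu>) (inflation V2 \<mu>)) (join_le inflation_le inflation_le)"
    unfolding faces_def
    by (rule poset_iso_product_join_carrier)
      (simp_all add: inflation_not_le_empty_face)
  ultimately show ?thesis
    by (simp add: inflation_restrict_mult poset_iso_trans)
qed

end
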